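(* Let $\phi\in[\tfrac{\pi}{2},\pi]$ and $C_\phi=\mathrm{diag}(1,1,1,e^{i\phi})$. Define $$b=\arccos\!\Big(\frac{\frac{1}{\sqrt2}-\cos^2\frac{\phi}{2}}{\sin^2\frac{\phi}{2}}\Big),\quad p=\sqrt{\tfrac12\Big(1+\tfrac{\sqrt2-1}{\tan(\phi/2)}\Big)},\quad q=\sqrt{\tfrac12\Big(1-\tfrac{\sqrt2-1}{\tan(\phi/2)}\Big)}$$ (with $\tfrac{\sqrt2-1}{\tan(\pi/2)}:=0$), and $U_1=\begin{pmatrix} ip & iq\\ -q & p\end{pmatrix}$, $U_2=\begin{pmatrix} ip & -q\\ -iq & -p\end{pmatrix}$. Then $$e^{\frac{\pi}{4}\frac{i}{2}\sigma_z\otimes\sigma_z}=e^{-i\frac{\phi}{2}}\big(e^{i\frac{\phi}{4}\sigma_z}\otimes U_1e^{i\frac{\phi}{4}\sigma_z}\big)\,C_\phi\,\big(e^{i\frac{\phi}{4}\sigma_z}\otimes e^{\frac{i}{2}(b+\pi)\sigma_y}e^{i\frac{\phi}{4}\sigma_z}\big)\,C_\phi\,(I\otimes U_2).$$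
   Context: $\sigma_y,\sigma_z$ are Pauli matrices, $I$ the $2\times2$ identity; the basis is $|00\rangle,|01\rangle,|10\rangle,|11\rangle$ with the first tensor factor being the first qubit and $\sigma_z=\mathrm{diag}(1,-1)$. *)

theory Defs
  imports Complex_Main "Jordan_Normal_Form.Matrix"
begin

definition mexp :: "complex mat \<Rightarrow> complex mat" where
  "mexp A = mat (dim_row A) (dim_col A)
     (\<lambda>(i,j). (\<Sum>k. (A ^\<^sub>m k) $$ (i,j) / of_nat (fact k)))"

text \<open>Kronecker (tensor) product; the first factor is the first (most significant) qubit,
  so the basis order is 00, 01, 10, 11.\<close>
definition kron :: "complex mat \<Rightarrow> complex mat \<Rightarrow> complex mat" where
  "kron A B = mat (dim_row A * dim_row B) (dim_col A * dim_col B)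
     (\<lambda>(i,j). A $$ (i div dim_row B, j div dim_col B) * B $$ (i mod dim_row B, j mod dim_col B))"

definition sigma_y :: "complex mat" where
  "sigma_y = mat_of_rows_list 2 [[0, - \<i>], [\<i>, 0]]"

definition sigma_z :: "complex mat" where
  "sigma_z = mat_of_rows_list 2 [[1, 0], [0, -1]]"

definition Id2 :: "complex mat" where
  "Id2 = mat_of_rows_list 2 [[1, 0], [0, 1]]"

definition Cphi :: "real \<Rightarrow> complex mat" where
  "Cphi \<phi> = mat_of_rows_list 4
     [[1,0,0,0],[0,1,0,0],[0,0,1,0],[0,0,0,exp (\<i> * of_real \<phi>)]]"

text \<open>Parameters. Note: in Isabelle tan(pi/2) = 0 and x / 0 = 0, which realises the
  paper's convention (sqrt 2 - 1)/tan(pi/2) := 0; we make it explicit anyway.\<close>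
definition tq :: "real \<Rightarrow> real" where
  "tq \<phi> = (if \<phi> = pi then 0 else (sqrt 2 - 1) / tan (\<phi> / 2))"

definition bpar :: "real \<Rightarrow> real" where
  "bpar \<phi> = arccos ((1 / sqrt 2 - (cos (\<phi> / 2))\<^sup>2) / (sin (\<phi> / 2))\<^sup>2)"

definition ppar :: "real \<Rightarrow> real" where
  "ppar \<phi> = sqrt ((1 + tq \<phi>) / 2)"

definition qpar :: "real \<Rightarrow> real" where
  "qpar \<phi> = sqrt ((1 - tq \<phi>) / 2)"

definition U1 :: "real \<Rightarrow> complex mat" where
  "U1 \<phi> = mat_of_rows_list 2
     [[\<i> * of_real (ppar \<phi>), \<i> * of_real (qpar \<phi>)], [- of_real (qpar \<phi>), of_real (ppar \<phi>)]]"

definition U2 :: "real \<Rightarrow> complex mat" where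
  "U2 \<phi> = mat_of_rows_list 2
     [[\<i> * of_real (ppar \<phi>), - of_real (qpar \<phi>)], [- \<i> * of_real (qpar \<phi>), - of_real (ppar \<phi>)]]"

end

theory Submission
  imports Defs
begin

text \<open>Every exponential in the statement is the exponential of an involution, so
  exp (c A) = cosh c + sinh c A turns both sides into explicit matrices: the left-hand side is
  diag (e^(i pi/8), e^(-i pi/8), e^(-i pi/8), e^(i pi/8)), and with z = e^(i phi/4) the right-hand side
  is a product of matrices whose entries are polynomials in z, 1/z, p, q and the cosine and sine of
  theta = (b + pi)/2. Multiplying out, the identity reduces to three trigonometric equations, the
  first being sin (b/2) sin (phi/2) = sin (pi/8). They follow from the defining equations of b, p and
  q after squaring; the restriction phi \<in> [pi/2, pi] makes the arccos and the square roots
  well defined and supplies the signs needed to take square roots back.\<close>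

lemma exp_series_complex: "(\<lambda>k. x ^ k / of_nat (fact k)) sums exp (x :: complex)"
  using exp_converges[of x] by (simp add: scaleR_conv_of_real divide_inverse mult.commute)

lemma exp_i_times_of_real: "exp (\<i> * of_real a) = of_real (cos a) + \<i> * of_real (sin a)"
  by (simp flip: cis_conv_exp add: complex_eq_iff)

lemma power_smult_involution:
  fixes A :: "'a :: comm_ring_1 mat"
  assumes A: "A \<in> carrier_mat n n" and AA: "A * A = 1\<^sub>m n"
  shows "(c \<cdot>\<^sub>m A) ^\<^sub>m k = c ^ k \<cdot>\<^sub>m (if even k then 1\<^sub>m n else A)"
proof (induction k)
  case 0
  then show ?case using A by auto
next
  case (Suc k)
  let ?B = "if even k then 1\<^sub>m n else A"
  have B: "?B \<in> carrier_mat n n" and cA: "c \<cdot>\<^sub>m A \<in> carrier_mat n n"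
    using A by auto
  have "(c \<cdot>\<^sub>m A) ^\<^sub>m Suc k = c ^ k \<cdot>\<^sub>m ?B * (c \<cdot>\<^sub>m A)"
    using Suc by simp
  also have "\<dots> = c ^ k \<cdot>\<^sub>m (?B * (c \<cdot>\<^sub>m A))"
    by (rule mult_smult_assoc_mat[OF B cA])
  also have "?B * (c \<cdot>\<^sub>m A) = c \<cdot>\<^sub>m (?B * A)"
    by (rule mult_smult_distrib[OF B A])
  also have "c ^ k \<cdot>\<^sub>m (c \<cdot>\<^sub>m (?B * A)) = c ^ Suc k \<cdot>\<^sub>m (?B * A)"
    by (rule eq_matI) auto
  also have "?B * A = (if even (Suc k) then 1\<^sub>m n else A)"
    using A AA by auto
  finally show ?case .
qed

lemma mexp_smult_involution:
  fixes A :: "complex mat"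
  assumes A: "A \<in> carrier_mat n n" and AA: "A * A = 1\<^sub>m n"
  shows "mexp (c \<cdot>\<^sub>m A) = cosh c \<cdot>\<^sub>m 1\<^sub>m n + sinh c \<cdot>\<^sub>m A"
proof (rule eq_matI)
  fix i j assume "i < dim_row (cosh c \<cdot>\<^sub>m 1\<^sub>m n + sinh c \<cdot>\<^sub>m A)"
    and "j < dim_col (cosh c \<cdot>\<^sub>m 1\<^sub>m n + sinh c \<cdot>\<^sub>m A)"
  then have ij: "i < n" "j < n" using A by auto
  define d where "d = (1\<^sub>m n :: complex mat) $$ (i, j)"
  define a where "a = A $$ (i, j)"
  have series_term: "((c \<cdot>\<^sub>m A) ^\<^sub>m k) $$ (i, j) / of_nat (fact k) =
      (d + a) / 2 * (c ^ k / of_nat (fact k)) + (d - a) / 2 * ((- c) ^ k / of_nat (fact k))" for k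
    using ij A by (cases "even k") (auto simp: power_smult_involution[OF A AA] d_def a_def field_simps)
  have "(\<lambda>k. ((c \<cdot>\<^sub>m A) ^\<^sub>m k) $$ (i, j) / of_nat (fact k)) sums
      ((d + a) / 2 * exp c + (d - a) / 2 * exp (- c))"
    unfolding series_term by (intro sums_add sums_mult exp_series_complex)
  then show "mexp (c \<cdot>\<^sub>m A) $$ (i, j) = (cosh c \<cdot>\<^sub>m 1\<^sub>m n + sinh c \<cdot>\<^sub>m A) $$ (i, j)"
    using ij A unfolding mexp_def
    by (simp add: sums_iff cosh_field_def sinh_field_def d_def a_def field_simps)
qed (use A in \<open>auto simp: mexp_def\<close>)

lemma mult_mat_of_rows_list_2:
  "mat_of_rows_list 2 [[a00, a01], [a10, a11]] * mat_of_rows_list 2 [[b00, b01], [b10, b11]] =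
   mat_of_rows_list 2 [[a00*b00 + a01*b10, a00*b01 + a01*b11], [a10*b00 + a11*b10, a10*b01 + a11*b11]]"
  by (rule eq_matI) (auto simp: mat_of_rows_list_def scalar_prod_def eval_nat_numeral less_Suc_eq)

lemma mult_mat_of_rows_list_4:
  "mat_of_rows_list 4 [[a00, a01, a02, a03], [a10, a11, a12, a13], [a20, a21, a22, a23], [a30, a31, a32, a33]] *
   mat_of_rows_list 4 [[b00, b01, b02, b03], [b10, b11, b12, b13], [b20, b21, b22, b23], [b30, b31, b32, b33]] =
   mat_of_rows_list 4
    [[a00*b00 + a01*b10 + a02*b20 + a03*b30, a00*b01 + a01*b11 + a02*b21 + a03*b31,
      a00*b02 + a01*b12 + a02*b22 + a03*b32, a00*b03 + a01*b13 + a02*b23 + a03*b33],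
     [a10*b00 + a11*b10 + a12*b20 + a13*b30, a10*b01 + a11*b11 + a12*b21 + a13*b31,
      a10*b02 + a11*b12 + a12*b22 + a13*b32, a10*b03 + a11*b13 + a12*b23 + a13*b33],
     [a20*b00 + a21*b10 + a22*b20 + a23*b30, a20*b01 + a21*b11 + a22*b21 + a23*b31,
      a20*b02 + a21*b12 + a22*b22 + a23*b32, a20*b03 + a21*b13 + a22*b23 + a23*b33],
     [a30*b00 + a31*b10 + a32*b20 + a33*b30, a30*b01 + a31*b11 + a32*b21 + a33*b31,
      a30*b02 + a31*b12 + a32*b22 + a33*b32, a30*b03 + a31*b13 + a32*b23 + a33*b33]]"
  by (rule eq_matI) (auto simp: mat_of_rows_list_def scalar_prod_def eval_nat_numeral less_Suc_eq)

lemma smult_mat_of_rows_list_4: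
  "g \<cdot>\<^sub>m mat_of_rows_list 4 [[a00, a01, a02, a03], [a10, a11, a12, a13], [a20, a21, a22, a23], [a30, a31, a32, a33]] =
   mat_of_rows_list 4 [[g*a00, g*a01, g*a02, g*a03], [g*a10, g*a11, g*a12, g*a13],
     [g*a20, g*a21, g*a22, g*a23], [g*a30, g*a31, g*a32, g*a33]]"
  by (rule eq_matI) (auto simp: mat_of_rows_list_def eval_nat_numeral less_Suc_eq)

lemma kron_mat_of_rows_list_2:
  "kron (mat_of_rows_list 2 [[a00, a01], [a10, a11]]) (mat_of_rows_list 2 [[b00, b01], [b10, b11]]) =
   mat_of_rows_list 4 [[a00*b00, a00*b01, a01*b00, a01*b01], [a00*b10, a00*b11, a01*b10, a01*b11],
     [a10*b00, a10*b01, a11*b00, a11*b01], [a10*b10, a10*b11, a11*b10, a11*b11]]"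
  (is "?K = mat_of_rows_list 4 ?rows")
proof (rule eq_matI)
  fix i j assume "i < dim_row (mat_of_rows_list 4 ?rows)" "j < dim_col (mat_of_rows_list 4 ?rows)"
  then have "i \<in> {0, 1, 2, 3}" "j \<in> {0, 1, 2, 3}"
    by (auto simp: mat_of_rows_list_def)
  then show "?K $$ (i, j) = mat_of_rows_list 4 ?rows $$ (i, j)"
    by (auto simp: kron_def mat_of_rows_list_def simp flip: numeral_2_eq_2)
qed (auto simp: kron_def mat_of_rows_list_def)

lemma sigma_z_carrier: "sigma_z \<in> carrier_mat 2 2"
  by (simp add: sigma_z_def mat_of_rows_list_def eval_nat_numeral)

lemma sigma_y_carrier: "sigma_y \<in> carrier_mat 2 2"
  by (simp add: sigma_y_def mat_of_rows_list_def eval_nat_numeral)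

lemma sigma_z_squared: "sigma_z * sigma_z = 1\<^sub>m 2"
  by (rule eq_matI) (auto simp: sigma_z_def mat_of_rows_list_def eval_nat_numeral less_Suc_eq scalar_prod_def)

lemma sigma_y_squared: "sigma_y * sigma_y = 1\<^sub>m 2"
  by (rule eq_matI) (auto simp: sigma_y_def mat_of_rows_list_def eval_nat_numeral less_Suc_eq scalar_prod_def)

lemma kron_sigma_z_sigma_z:
  "kron sigma_z sigma_z = mat_of_rows_list 4 [[1, 0, 0, 0], [0, -1, 0, 0], [0, 0, -1, 0], [0, 0, 0, 1]]"
  by (simp add: sigma_z_def kron_mat_of_rows_list_2)

lemma mexp_smult_sigma_z: "mexp (c \<cdot>\<^sub>m sigma_z) = mat_of_rows_list 2 [[exp c, 0], [0, exp (- c)]]"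
  unfolding mexp_smult_involution[OF sigma_z_carrier sigma_z_squared]
  by (rule eq_matI)
    (auto simp: sigma_z_def mat_of_rows_list_def eval_nat_numeral less_Suc_eq cosh_plus_sinh cosh_minus_sinh)

lemma mexp_smult_sigma_y:
  "mexp ((\<i> * of_real \<theta>) \<cdot>\<^sub>m sigma_y) =
   mat_of_rows_list 2 [[of_real (cos \<theta>), of_real (sin \<theta>)], [- of_real (sin \<theta>), of_real (cos \<theta>)]]"
proof -
  have "exp (- (\<i> * of_real \<theta>)) = exp (\<i> * of_real (- \<theta>))" by simp
  then have "cosh (\<i> * of_real \<theta>) = of_real (cos \<theta>)" "sinh (\<i> * of_real \<theta>) = \<i> * of_real (sin \<theta>)"
    by (simp_all only: cosh_field_def sinh_field_def exp_i_times_of_real) (simp_all add: field_simps)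
  then show ?thesis
    unfolding mexp_smult_involution[OF sigma_y_carrier sigma_y_squared]
    by (intro eq_matI) (auto simp: sigma_y_def mat_of_rows_list_def eval_nat_numeral less_Suc_eq mult.commute)
qed

lemma mexp_smult_kron_sigma_z_sigma_z:
  "mexp (c \<cdot>\<^sub>m kron sigma_z sigma_z) =
   mat_of_rows_list 4 [[exp c, 0, 0, 0], [0, exp (- c), 0, 0], [0, 0, exp (- c), 0], [0, 0, 0, exp c]]"
proof -
  have "kron sigma_z sigma_z \<in> carrier_mat 4 4"
    by (simp add: kron_sigma_z_sigma_z mat_of_rows_list_def eval_nat_numeral)
  moreover have "kron sigma_z sigma_z * kron sigma_z sigma_z = 1\<^sub>m 4"
    unfolding kron_sigma_z_sigma_z mult_mat_of_rows_list_4
    by (rule eq_matI) (auto simp: mat_of_rows_list_def eval_nat_numeral less_Suc_eq)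
  ultimately have "mexp (c \<cdot>\<^sub>m kron sigma_z sigma_z) =
      cosh c \<cdot>\<^sub>m 1\<^sub>m 4 + sinh c \<cdot>\<^sub>m kron sigma_z sigma_z"
    by (rule mexp_smult_involution)
  then show ?thesis
    unfolding kron_sigma_z_sigma_z
    by (intro eq_matI)
      (auto simp: mat_of_rows_list_def eval_nat_numeral less_Suc_eq cosh_plus_sinh cosh_minus_sinh)
qed

lemma sqrt_two_bounds: "1 < sqrt 2" "sqrt 2 < 2"
  by (rule real_less_rsqrt, simp) (rule real_less_lsqrt, simp_all)

lemma sin_cos_pi_div_8:
  "sin (pi / 8) ^ 2 = (2 - sqrt 2) / 4" "0 < sin (pi / 8)" "cos (pi / 8) * sin (pi / 8) = sqrt 2 / 4"
proof -
  show "sin (pi / 8) ^ 2 = (2 - sqrt 2) / 4"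
    using cos_double_sin[of "pi / 8"] cos_45 by (simp add: real_div_sqrt)
  show "0 < sin (pi / 8)" by (rule sin_gt_zero) auto
  show "cos (pi / 8) * sin (pi / 8) = sqrt 2 / 4"
    using sin_double[of "pi / 8"] sin_45 by (simp add: real_div_sqrt)
qed

lemma decomposition_angle_equations:
  fixes u v p q cb sb :: real
  assumes circle: "u^2 + v^2 = 1" and v: "0 < v"
    and pq: "p^2 + q^2 = 1" "0 \<le> p" "0 \<le> q" "(p^2 - q^2) * v = (sqrt 2 - 1) * u"
    and b: "cb^2 + sb^2 = 1" "0 \<le> cb" "0 \<le> sb" "(cb^2 - sb^2) * v^2 = sqrt 2 / 2 - u^2"
  shows "sb * v = sin (pi / 8)"
    and "2 * p * q * cb + sb * (p^2 - q^2) * u = cos (pi / 8)"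
    and "(p^2 - q^2) * cb = 2 * u * p * q * sb"
proof -
  define r s8 c8 where "r = sqrt 2" and "s8 = sin (pi / 8)" and "c8 = cos (pi / 8)"
  define t k where "t = p^2 - q^2" and "k = cb^2 - sb^2"
  have r: "r * r - 2 = 0" "1 < r" using sqrt_two_bounds by (simp_all add: r_def)
  have s8: "4 * s8^2 = 2 - r" "0 < s8" "4 * c8 * s8 = r"
    using sin_cos_pi_div_8 by (simp_all add: r_def s8_def c8_def)
  have t: "2 * p^2 = 1 + t" "2 * q^2 = 1 - t" "t * v = (r - 1) * u"
    using pq(1,4) by (simp_all add: t_def r_def)
  have k: "2 * sb^2 = 1 - k" "2 * cb^2 = 1 + k" "2 * k * v^2 = r - 2 * u^2"
    using b(1,4) by (simp_all add: k_def r_def field_simps)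
  have "(sb * v)^2 = s8^2"
    using circle k s8(1) by Groebner_Basis.algebra
  then show sbv: "sb * v = s8"
    using b(3) v s8(2) by simp
  have "(2 * p * q * s8)^2 = ((r - 1) * cb)^2"
    using r(1) circle t k s8(1) by Groebner_Basis.algebra
  then have key: "2 * p * q * s8 = (r - 1) * cb"
    using pq(2,3) s8(2) b(2) r(2) by simp
  have "s8 * v * (t * cb - 2 * u * p * q * sb) = 0"
    using key sbv t(3) by Groebner_Basis.algebra
  then show "(p^2 - q^2) * cb = 2 * u * p * q * sb"
    using s8(2) v by (simp add: t_def)
  have "s8 * v^2 * (2 * p * q * cb + sb * t * u - c8) = 0"
    using key sbv r(1) circle t k s8 by Groebner_Basis.algebra
  then show "2 * p * q * cb + sb * (p^2 - q^2) * u = c8"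
    using s8(2) v by (simp add: t_def)
qed

lemma half_angle_bounds:
  assumes "pi / 2 \<le> \<phi>" "\<phi> \<le> pi"
  shows "0 \<le> cos (\<phi> / 2)" "0 < sin (\<phi> / 2)"
    and "cos (\<phi> / 2) ^ 2 \<le> sin (\<phi> / 2) ^ 2" "cos (\<phi> / 2) \<le> sin (\<phi> / 2)"
proof -
  show "0 \<le> cos (\<phi> / 2)" using assms by (intro cos_ge_zero) auto
  show sin_pos: "0 < sin (\<phi> / 2)" by (rule sin_gt_zero) (use assms pi_gt_zero in linarith)+
  have "0 \<le> cos (pi - \<phi>)" using assms by (intro cos_ge_zero) auto
  then show squares: "cos (\<phi> / 2) ^ 2 \<le> sin (\<phi> / 2) ^ 2"
    using cos_double[of "\<phi> / 2"] by simp
  show "cos (\<phi> / 2) \<le> sin (\<phi> / 2)"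
    using squares sin_pos by (simp add: power2_le_iff_abs_le)
qed

lemma tq_mult_sin_half:
  assumes "0 < \<phi>" "\<phi> \<le> pi"
  shows "tq \<phi> * sin (\<phi> / 2) = (sqrt 2 - 1) * cos (\<phi> / 2)"
proof (cases "\<phi> = pi")
  case True
  then show ?thesis by (simp add: tq_def)
next
  case False
  have "0 < sin (\<phi> / 2)" by (rule sin_gt_zero) (use assms in auto)
  then show ?thesis using False by (simp add: tq_def tan_def)
qed

lemma tq_bounds:
  assumes "pi / 2 \<le> \<phi>" "\<phi> \<le> pi"
  shows "0 \<le> tq \<phi>" "tq \<phi> \<le> 1"
proof -
  note half = half_angle_bounds[OF assms]
  have tq: "tq \<phi> * sin (\<phi> / 2) = (sqrt 2 - 1) * cos (\<phi> / 2)"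
    by (rule tq_mult_sin_half) (use assms pi_gt_zero in linarith)+
  have "0 \<le> tq \<phi> * sin (\<phi> / 2)" using tq half(1) sqrt_two_bounds by simp
  then show "0 \<le> tq \<phi>" using half(2) by (simp add: zero_le_mult_iff)
  have "(sqrt 2 - 1) * cos (\<phi> / 2) \<le> 1 * sin (\<phi> / 2)"
    using half sqrt_two_bounds by (intro mult_mono) auto
  then have "tq \<phi> * sin (\<phi> / 2) \<le> 1 * sin (\<phi> / 2)" using tq by simp
  then show "tq \<phi> \<le> 1" using half(2) by (simp only: mult_le_cancel_right_pos)
qed

lemma ppar_qpar_squares:
  assumes "pi / 2 \<le> \<phi>" "\<phi> \<le> pi"
  shows "ppar \<phi> ^ 2 + qpar \<phi> ^ 2 = 1" "ppar \<phi> ^ 2 - qpar \<phi> ^ 2 = tq \<phi>"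
  using tq_bounds[OF assms] by (simp_all add: ppar_def qpar_def field_simps)

lemma cos_bpar:
  assumes "pi / 2 \<le> \<phi>" "\<phi> \<le> pi"
  shows "cos (bpar \<phi>) * sin (\<phi> / 2) ^ 2 = sqrt 2 / 2 - cos (\<phi> / 2) ^ 2"
    and "0 \<le> bpar \<phi>" "bpar \<phi> \<le> pi"
proof -
  define k where "k = (1 / sqrt 2 - cos (\<phi> / 2) ^ 2) / sin (\<phi> / 2) ^ 2"
  note half = half_angle_bounds[OF assms]
  have k: "k * sin (\<phi> / 2) ^ 2 = sqrt 2 / 2 - cos (\<phi> / 2) ^ 2"
    using half(2) by (simp add: k_def real_div_sqrt)
  have sin_sq_pos: "0 < sin (\<phi> / 2) ^ 2" using half(2) by simp
  have "k * sin (\<phi> / 2) ^ 2 \<le> 1 * sin (\<phi> / 2) ^ 2"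
    unfolding k using sin_cos_squared_add[of "\<phi> / 2"] sqrt_two_bounds by linarith
  then have "k \<le> 1" using sin_sq_pos by (simp only: mult_le_cancel_right_pos)
  moreover have "- 1 * sin (\<phi> / 2) ^ 2 \<le> k * sin (\<phi> / 2) ^ 2"
    unfolding k using half(3) sqrt_two_bounds by linarith
  then have "- 1 \<le> k" using sin_sq_pos by (simp only: mult_le_cancel_right_pos)
  ultimately have "cos (bpar \<phi>) = k" "0 \<le> bpar \<phi>" "bpar \<phi> \<le> pi"
    by (simp_all add: bpar_def k_def[symmetric] arccos_lbound arccos_ubound)
  then show "cos (bpar \<phi>) * sin (\<phi> / 2) ^ 2 = sqrt 2 / 2 - cos (\<phi> / 2) ^ 2"
    and "0 \<le> bpar \<phi>" "bpar \<phi> \<le> pi"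
    using k by simp_all
qed

lemma bpar_rotation_equations:
  assumes \<phi>: "pi / 2 \<le> \<phi>" "\<phi> \<le> pi"
  defines "\<theta> \<equiv> (bpar \<phi> + pi) / 2"
  shows "cos \<theta> * sin (\<phi> / 2) = - sin (pi / 8)"
    and "2 * ppar \<phi> * qpar \<phi> * sin \<theta> - cos \<theta> * (ppar \<phi> ^ 2 - qpar \<phi> ^ 2) * cos (\<phi> / 2) = cos (pi / 8)"
    and "2 * cos (\<phi> / 2) * ppar \<phi> * qpar \<phi> * cos \<theta> + (ppar \<phi> ^ 2 - qpar \<phi> ^ 2) * sin \<theta> = 0"
proof -
  have rotation: "cos \<theta> = - sin (bpar \<phi> / 2)" "sin \<theta> = cos (bpar \<phi> / 2)"
    by (simp_all add: \<theta>_def add_divide_distrib cos_add sin_add)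
  have circle: "cos (\<phi> / 2) ^ 2 + sin (\<phi> / 2) ^ 2 = 1" "0 < sin (\<phi> / 2)"
    using half_angle_bounds[OF \<phi>] by simp_all
  have p: "ppar \<phi> ^ 2 + qpar \<phi> ^ 2 = 1" "0 \<le> ppar \<phi>" "0 \<le> qpar \<phi>"
      "(ppar \<phi> ^ 2 - qpar \<phi> ^ 2) * sin (\<phi> / 2) = (sqrt 2 - 1) * cos (\<phi> / 2)"
    using ppar_qpar_squares[OF \<phi>] tq_bounds[OF \<phi>] tq_mult_sin_half[of \<phi>] \<phi> pi_gt_zero
    by (simp_all add: ppar_def qpar_def)
  have b: "cos (bpar \<phi> / 2) ^ 2 + sin (bpar \<phi> / 2) ^ 2 = 1"
      "0 \<le> cos (bpar \<phi> / 2)" "0 \<le> sin (bpar \<phi> / 2)"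
      "(cos (bpar \<phi> / 2) ^ 2 - sin (bpar \<phi> / 2) ^ 2) * sin (\<phi> / 2) ^ 2 = sqrt 2 / 2 - cos (\<phi> / 2) ^ 2"
    using cos_bpar[OF \<phi>] cos_double[of "bpar \<phi> / 2"] by (auto intro!: cos_ge_zero sin_ge_zero)
  note equations = decomposition_angle_equations[OF circle p b]
  show "cos \<theta> * sin (\<phi> / 2) = - sin (pi / 8)"
    using equations(1) rotation by simp
  show "2 * ppar \<phi> * qpar \<phi> * sin \<theta> - cos \<theta> * (ppar \<phi> ^ 2 - qpar \<phi> ^ 2) * cos (\<phi> / 2) = cos (pi / 8)"
    using equations(2) rotation by (simp add: algebra_simps)
  show "2 * cos (\<phi> / 2) * ppar \<phi> * qpar \<phi> * cos \<theta> + (ppar \<phi> ^ 2 - qpar \<phi> ^ 2) * sin \<theta> = 0"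
    using equations(3) rotation by (simp add: algebra_simps)
qed

lemma controlled_phase_circuit_identity:
  fixes z zi g E :: complex and u v p q C S c8 s8 :: real
  assumes z: "z * zi = 1" "z ^ 2 = of_real u + \<i> * of_real v" "E = z ^ 4" "g * z ^ 2 = 1"
    and circle: "u ^ 2 + v ^ 2 = 1" and pq: "p ^ 2 + q ^ 2 = 1"
    and eq1: "C * v = - s8"
    and eq2: "2 * p * q * S - C * (p ^ 2 - q ^ 2) * u = c8"
    and eq3: "2 * u * p * q * C + (p ^ 2 - q ^ 2) * S = 0"
  shows "mat_of_rows_list 4
      [[of_real c8 + \<i> * of_real s8, 0, 0, 0], [0, of_real c8 - \<i> * of_real s8, 0, 0],
       [0, 0, of_real c8 - \<i> * of_real s8, 0], [0, 0, 0, of_real c8 + \<i> * of_real s8]] =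
    g \<cdot>\<^sub>m
    (kron (mat_of_rows_list 2 [[z, 0], [0, zi]])
          (mat_of_rows_list 2 [[\<i> * of_real p, \<i> * of_real q], [- of_real q, of_real p]]
           * mat_of_rows_list 2 [[z, 0], [0, zi]])
     * mat_of_rows_list 4 [[1, 0, 0, 0], [0, 1, 0, 0], [0, 0, 1, 0], [0, 0, 0, E]]
     * kron (mat_of_rows_list 2 [[z, 0], [0, zi]])
            (mat_of_rows_list 2 [[of_real C, of_real S], [- of_real S, of_real C]]
             * mat_of_rows_list 2 [[z, 0], [0, zi]])
     * mat_of_rows_list 4 [[1, 0, 0, 0], [0, 1, 0, 0], [0, 0, 1, 0], [0, 0, 0, E]]
     * kron (mat_of_rows_list 2 [[1, 0], [0, 1]])
            (mat_of_rows_list 2 [[\<i> * of_real p, - of_real q], [- \<i> * of_real q, - of_real p]]))"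
proof -
  have complex_eqs:
    "(of_real u) ^ 2 + (of_real v) ^ 2 = (1 :: complex)"
    "(of_real p) ^ 2 + (of_real q) ^ 2 = (1 :: complex)"
    "of_real C * of_real v = - (of_real s8 :: complex)"
    "2 * of_real p * of_real q * of_real S - of_real C * ((of_real p) ^ 2 - (of_real q) ^ 2) * of_real u
       = (of_real c8 :: complex)"
    "2 * of_real u * of_real p * of_real q * of_real C + ((of_real p) ^ 2 - (of_real q) ^ 2) * of_real S
       = (0 :: complex)"
    using arg_cong[where f = complex_of_real, OF circle] arg_cong[where f = complex_of_real, OF pq]
      arg_cong[where f = complex_of_real, OF eq1] arg_cong[where f = complex_of_real, OF eq2]
      arg_cong[where f = complex_of_real, OF eq3]
    by simp_all
  note facts = z complex_eqs power2_i
  \<comment> \<open>modulo z zi = 1 and the two circle relations, each entry reduces to one of eq1, eq2, eq3\<close>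
  show ?thesis
    unfolding mult_mat_of_rows_list_2 kron_mat_of_rows_list_2 mult_mat_of_rows_list_4
      smult_mat_of_rows_list_4
    by (rule arg_cong[where f = "mat_of_rows_list 4"], simp, intro conjI; insert facts; Groebner_Basis.algebra)
qed

theorem mainTheorem9:
  fixes \<phi> :: real
  assumes "pi / 2 \<le> \<phi>" and "\<phi> \<le> pi"
  shows "mexp ((of_real (pi / 4) * \<i> / 2) \<cdot>\<^sub>m kron sigma_z sigma_z) =
    exp (- \<i> * of_real (\<phi> / 2)) \<cdot>\<^sub>m
    (kron (mexp ((\<i> * of_real (\<phi> / 4)) \<cdot>\<^sub>m sigma_z))
          (U1 \<phi> * mexp ((\<i> * of_real (\<phi> / 4)) \<cdot>\<^sub>m sigma_z))
     * Cphi \<phi>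
     * kron (mexp ((\<i> * of_real (\<phi> / 4)) \<cdot>\<^sub>m sigma_z))
            (mexp ((\<i> / 2 * of_real (bpar \<phi> + pi)) \<cdot>\<^sub>m sigma_y)
             * mexp ((\<i> * of_real (\<phi> / 4)) \<cdot>\<^sub>m sigma_z))
     * Cphi \<phi>
     * kron Id2 (U2 \<phi>))"
proof -
  let ?z = "exp (\<i> * of_real (\<phi> / 4))"
  have z_powers: "?z ^ 2 = exp (\<i> * of_real (\<phi> / 2))" "?z ^ 4 = exp (\<i> * of_real \<phi>)"
    by (simp_all flip: exp_of_nat_mult)
  have z_squared: "?z ^ 2 = of_real (cos (\<phi> / 2)) + \<i> * of_real (sin (\<phi> / 2))"
    unfolding z_powers(1) by (rule exp_i_times_of_real)
  have global_phase: "exp (- \<i> * of_real (\<phi> / 2)) * ?z ^ 2 = 1"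
    unfolding z_powers(1) by (simp add: exp_minus)
  have phases:
    "exp (of_real (pi / 4) * \<i> / 2) = of_real (cos (pi / 8)) + \<i> * of_real (sin (pi / 8))"
    "exp (- (of_real (pi / 4) * \<i> / 2)) = of_real (cos (pi / 8)) - \<i> * of_real (sin (pi / 8))"
    using exp_i_times_of_real[of "pi / 8"] exp_i_times_of_real[of "- pi / 8"] by (simp_all add: mult.commute)
  have rotation_angle: "\<i> / 2 * of_real (bpar \<phi> + pi) = \<i> * of_real ((bpar \<phi> + pi) / 2)"
    by simp
  show ?thesis
    unfolding mexp_smult_kron_sigma_z_sigma_z mexp_smult_sigma_z rotation_angle mexp_smult_sigma_y
      U1_def U2_def Cphi_def Id2_def phases
    by (rule controlled_phase_circuit_identity[where u = "cos (\<phi> / 2)" and v = "sin (\<phi> / 2)"])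
      (use z_powers(2) z_squared global_phase bpar_rotation_equations[OF assms] ppar_qpar_squares[OF assms] in
        \<open>simp_all add: exp_minus\<close>)
qed

end
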